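(* Let $n_u,N\ge1$, $n=Nn_u$, and write $\mathbf{u}\in\mathbb{R}^n$ as $\mathbf{u}=(u_1,\dots,u_N)$ with $u_\ell\in\mathbb{R}^{n_u}$. Let $\varepsilon>0$ and $$\mathcal{U}=\{\mathbf{u}\in\mathbb{R}^n:\ \|u_\ell\|_2^2\le\varepsilon,\ \ell=1,\dots,N\}.$$ Let $\mathcal{P}$ be a finite index set of pairs $(i,j)$, and for each $(i,j)\in\mathcal{P}$ let $H^{[ij]}\in\mathbb{R}^{n\times n}$ be a nonzero symmetric positive semidefinite matrix, $c^{[ij]}\in\mathbb{R}^n$ in the column space of $H^{[ij]}$, $h^{[ij]}\in\mathbb{R}$, $w_{ij}\ge0$. Define $q_{ij}(\mathbf{z})=\mathbf{z}^\top H^{[ij]}\mathbf{z}+(c^{[ij]})^\top\mathbf{z}+\tfrac14(c^{[ij]})^\top (H^{[ij]})^{+}c^{[ij]}$, $D_{ij}=\{\mathbf{z}: q_{ij}(\mathbf{z})\le\tfrac12\}$, and $F(\mathbf{u})=\sum_{(i,j)\in\mathcal{P}}w_{ij}\exp(-\mathbf{u}^\top H^{[ij]}\mathbf{u}-(c^{[ij]})^\top\mathbf{u}-h^{[ij]})$. Suppose that for each $(i,j)\in\mathcal{P}$, $0\in D_{ij}$, and let $\mathbf{z}^*_{ij}$ be a minimizer of $\mathbf{z}^\top\mathbf{z}$ subject to $q_{ij}(\mathbf{z})=\tfrac12$ (such a minimizer exists). Then: (i) for each $(i,j)$, every $\mathbf{u}$ with $\|\mathbf{u}\|_2\le\|\mathbf{z}^*_{ij}\|_2$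 belongs to $D_{ij}$; (ii) if $\sqrt{\varepsilon N}\le\|\mathbf{z}^*_{ij}\|_2$ for every $(i,j)\in\mathcal{P}$, then $\mathcal{U}\subseteq D_{ij}$ for all $(i,j)$ and $F$ is concave on $\mathcal{U}$.
   Context: $(H)^{+}$ denotes the Moore–Penrose pseudoinverse. In the application, $F$ is the weighted sum of Bhattacharyya coefficients bounding the predicted misdiagnosis probability, with weights $w_{ij}=\sqrt{P_k(M^{[i]})P_k(M^{[j]})}$, and $\mathcal{U}$ is an input energy constraint set over a horizon of length $N$. *)

theory Defs
  imports "HOL-Analysis.Analysis"
begin

definition pinv :: "real^'n^'n \<Rightarrow> real^'n^'n" where
  "pinv A = (THE X. A ** X ** A = A \<and> X ** A ** X = X \<and>
                    transpose (A ** X) = A ** X \<and> transpose (X ** A) = X ** A)"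

definition psd :: "real^'n^'n \<Rightarrow> bool" where
  "psd A \<longleftrightarrow> transpose A = A \<and> (\<forall>x. 0 \<le> x \<bullet> (A *v x))"

text \<open>Block l of a vector indexed by (block index, within-block index).\<close>
definition blk :: "real^('N::finite \<times> 'u::finite) \<Rightarrow> 'N \<Rightarrow> real^'u" where
  "blk u l = (\<chi> k. u $ (l, k))"

definition qf :: "real^'n^'n \<Rightarrow> real^'n \<Rightarrow> real^'n \<Rightarrow> real" where
  "qf H c z = z \<bullet> (H *v z) + c \<bullet> z + 1/4 * (c \<bullet> (pinv H *v c))"

definition Dset :: "real^'n^'n \<Rightarrow> real^'n \<Rightarrow> (real^'n) set" where
  "Dset H c = {z. qf H c z \<le> 1/2}"

definition is_qmin :: "real^'n^'n \<Rightarrow> real^'n \<Rightarrow> real^'n \<Rightarrow> bool" where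
  "is_qmin H c z \<longleftrightarrow> qf H c z = 1/2 \<and> (\<forall>y. qf H c y = 1/2 \<longrightarrow> z \<bullet> z \<le> y \<bullet> y)"

definition Uset :: "real \<Rightarrow> (real^('N::finite \<times> 'u::finite)) set" where
  "Uset \<epsilon> = {u. \<forall>l. (norm (blk u l))\<^sup>2 \<le> \<epsilon>}"

definition Fsum :: "'p set \<Rightarrow> ('p \<Rightarrow> real) \<Rightarrow> ('p \<Rightarrow> real^'n^'n) \<Rightarrow> ('p \<Rightarrow> real^'n)
                     \<Rightarrow> ('p \<Rightarrow> real) \<Rightarrow> real^'n \<Rightarrow> real" where
  "Fsum P w H c h u = (\<Sum>ij\<in>P. w ij * exp (- (u \<bullet> (H ij *v u)) - c ij \<bullet> u - h ij))"

end

theory Submission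
  imports Defs
begin

(* Because c = H x0, the identity H H\<^sup>+ H = H completes the square: qf H c z = Q (z + x0/2),
   where Q is the positive semidefinite form of H.  The level set qf = 1/2 is closed, and it is
   nonempty because qf grows quadratically along a ray on which Q is positive; so a point of
   minimal norm exists.
   (i) If norm u \<le> norm z* but u \<notin> D, then s \<mapsto> qf H c (s u), which is \<le> 1/2 at 0 and > 1/2 at 1,
   takes the value 1/2 at some s < 1, and s u is a point of the level set shorter than z*.
   (ii) U lies in the ball of radius sqrt (\<epsilon> N), hence in every D.  Along a segment w + s d inside D,
   exp (- Q) has second derivative ((2\<beta> + 2s\<gamma>)^2 - 2\<gamma>) exp (- Q), where \<beta> = d \<bullet> H w and \<gamma> = Q d,
   and the Cauchy-Schwarz inequality for Q gives (\<beta> + s\<gamma>)^2 \<le> Q (w + s d) \<gamma> \<le> \<gamma>/2.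
   Hence every summand of F is concave on U. *)

section \<open>Symmetric matrices and the Moore-Penrose pseudoinverse\<close>

lemma symmetric_matrix_inner_swap:
  fixes A :: "real^'n^'n"
  assumes "transpose A = A"
  shows "(A *v x) \<bullet> y = x \<bullet> (A *v y)"
  by (metis assms dot_lmul_matrix inner_commute transpose_matrix_vector)

lemma transpose_eq_selfI:
  fixes K :: "real^'n^'n"
  assumes "\<And>x y. x \<bullet> (K *v y) = (K *v x) \<bullet> y"
  shows "transpose K = K"
proof -
  have "transpose K *v x = K *v x" for x
    using assms dot_lmul_matrix by (metis inner_commute transpose_matrix_vector vector_eq_rdot)
  then show ?thesis by (simp add: matrix_eq)
qed

definition penrose :: "real^'n^'n \<Rightarrow> real^'n^'n \<Rightarrow> bool" where
  "penrose A X \<longleftrightarrow> A ** X ** A = A \<and> X ** A ** X = X \<and>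
                    transpose (A ** X) = A ** X \<and> transpose (X ** A) = X ** A"

lemma penrose_unique:
  assumes "penrose A X" "penrose A Y" shows "X = Y"
proof -
  let ?T = transpose
  have x1: "A ** X ** A = A" and x2: "X ** A ** X = X" and x3: "?T (A ** X) = A ** X"
    and x4: "?T (X ** A) = X ** A" using assms(1) by (auto simp: penrose_def)
  have y1: "A ** Y ** A = A" and y2: "Y ** A ** Y = Y" and y3: "?T (A ** Y) = A ** Y"
    and y4: "?T (Y ** A) = Y ** A" using assms(2) by (auto simp: penrose_def)
  have "X = X ** (A ** X)" using x2 by (simp add: matrix_mul_assoc)
  also have "\<dots> = X ** ?T (A ** X)" using x3 by simp
  also have "\<dots> = X ** ?T X ** ?T A" by (simp add: matrix_transpose_mul matrix_mul_assoc)
  also have "\<dots> = X ** ?T X ** ?T (A ** Y ** A)" using y1 by simp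
  also have "\<dots> = X ** (?T (A ** X) ** ?T (A ** Y))" by (simp add: matrix_transpose_mul matrix_mul_assoc)
  also have "\<dots> = X ** ((A ** X) ** (A ** Y))" using x3 y3 by simp
  also have "\<dots> = (X ** A ** X) ** A ** Y" by (simp add: matrix_mul_assoc)
  also have "\<dots> = X ** A ** Y" using x2 by simp
  finally have X: "X = X ** A ** Y" .
  have "Y = (Y ** A) ** Y" using y2 by (simp add: matrix_mul_assoc)
  also have "\<dots> = ?T (Y ** A) ** Y" using y4 by simp
  also have "\<dots> = ?T A ** ?T Y ** Y" by (simp add: matrix_transpose_mul matrix_mul_assoc)
  also have "\<dots> = ?T (A ** X ** A) ** ?T Y ** Y" using x1 by simp
  also have "\<dots> = (?T (X ** A) ** ?T (Y ** A)) ** Y" by (simp add: matrix_transpose_mul matrix_mul_assoc)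
  also have "\<dots> = ((X ** A) ** (Y ** A)) ** Y" using x4 y4 by simp
  also have "\<dots> = X ** (A ** Y ** A) ** Y" by (simp add: matrix_mul_assoc)
  also have "\<dots> = X ** A ** Y" using y1 by (simp add: matrix_mul_assoc)
  finally show ?thesis using X by simp
qed

lemma orthogonal_projection_matrix_exists:
  fixes N :: "(real^'n) set"
  assumes "subspace N"
  obtains P :: "real^'n^'n"
  where "transpose P = P" "\<And>v. P *v v \<in> N" "\<And>v. v \<in> N \<Longrightarrow> P *v v = v"
proof -
  obtain B where BN: "B \<subseteq> N" and Bo: "pairwise orthogonal B" and B1: "\<And>x. x \<in> B \<Longrightarrow> norm x = 1"
    and Bi: "independent B" and Bs: "span B = N"
    using orthonormal_basis_subspace[OF assms] by metis
  have fB: "finite B" using Bi independent_imp_finite by blast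
  define p where "p v = (\<Sum>b\<in>B. (b \<bullet> v) *\<^sub>R b)" for v
  have "linear p" unfolding p_def
    by (rule linearI) (simp_all add: inner_add_right scaleR_add_left sum.distrib scaleR_sum_right)
  then have Pv: "matrix p *v v = p v" for v by simp
  have pN: "p v \<in> N" for v
  proof -
    have "p v \<in> span B" unfolding p_def by (intro span_sum) (simp add: span_base span_mul)
    then show ?thesis using Bs by simp
  qed
  have inner_p: "b \<bullet> p v = b \<bullet> v" if "b \<in> B" for b v
  proof -
    have "b \<bullet> p v = (\<Sum>b'\<in>B. if b' = b then b \<bullet> v else 0)"
      unfolding p_def inner_sum_right
    proof (rule sum.cong)
      fix b' assume "b' \<in> B"
      then show "b \<bullet> ((b' \<bullet> v) *\<^sub>R b') = (if b' = b then b \<bullet> v else 0)"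
        using B1[OF that] Bo that by (auto simp: pairwise_def orthogonal_def dot_square_norm)
    qed simp
    then show ?thesis using fB that by simp
  qed
  have "p v = v" if "v \<in> N" for v
  proof -
    have "v - p v \<in> span B" using that pN Bs by (metis span_diff span_base span_span)
    moreover have "orthogonal (v - p v) b" if "b \<in> B" for b
      using inner_p[OF that] by (metis orthogonal_def inner_diff_left inner_commute diff_self)
    ultimately have "orthogonal (v - p v) (v - p v)" by (metis orthogonal_to_span)
    then show ?thesis by (simp add: orthogonal_self)
  qed
  moreover have "x \<bullet> p y = p x \<bullet> y" for x y
    unfolding p_def by (simp add: inner_sum_right inner_sum_left mult.commute inner_commute)
  then have "transpose (matrix p) = matrix p"
    by (intro transpose_eq_selfI) (simp add: Pv)
  ultimately show ?thesis using that[of "matrix p"] by (simp add: Pv pN)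
qed

lemma symmetric_plus_kernel_projection_inj:
  fixes A P :: "real^'n^'n"
  assumes symA: "transpose A = A" and AP: "\<And>v. A *v (P *v v) = 0"
    and Pfix: "\<And>v. A *v v = 0 \<Longrightarrow> P *v v = v"
  shows "inj ((*v) (A + P))"
proof (rule injI)
  fix x y assume "(A + P) *v x = (A + P) *v y"
  then have "A *v (x - y) + P *v (x - y) = 0"
    by (simp add: matrix_vector_mult_add_rdistrib matrix_vector_mult_diff_distrib algebra_simps)
  then have "(A *v (x - y) + P *v (x - y)) \<bullet> (A *v (x - y) + P *v (x - y)) = 0"
    by simp
  moreover have "(A *v (x - y)) \<bullet> (P *v (x - y)) = 0"
    by (simp add: symmetric_matrix_inner_swap[OF symA] AP)
  ultimately have "(A *v (x - y)) \<bullet> (A *v (x - y)) + (P *v (x - y)) \<bullet> (P *v (x - y)) = 0"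
    by (simp add: inner_add_left inner_add_right inner_commute)
  then have "A *v (x - y) = 0" "P *v (x - y) = 0"
    by (metis add_nonneg_eq_0_iff inner_ge_zero inner_eq_zero_iff)+
  then show "x = y" using Pfix[of "x - y"] by simp
qed

text \<open>For symmetric A take the orthogonal projection P onto the kernel of A; then A + P is
  invertible, and X = (A + P)^-1 - P inverts A on the range of A and vanishes on its kernel.\<close>

lemma penrose_exists_symmetric:
  fixes A :: "real^'n^'n"
  assumes symA: "transpose A = A"
  shows "\<exists>X. penrose A X"
proof -
  define N where "N = {v::real^'n. A *v v = 0}"
  have "subspace N" unfolding N_def
    by (simp add: subspace_def matrix_vector_right_distrib matrix_vector_mult_scaleR)
  then obtain P where symP: "transpose P = P" and PN: "\<And>v. P *v v \<in> N"
    and Pfix: "\<And>v. v \<in> N \<Longrightarrow> P *v v = v"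
    by (rule orthogonal_projection_matrix_exists) blast
  have AP: "A *v (P *v v) = 0" for v using PN[of v] by (simp add: N_def)
  have PP: "P *v (P *v v) = P *v v" for v using Pfix PN by simp
  have PA: "P *v (A *v v) = 0" for v
  proof -
    have "(P *v (A *v v)) \<bullet> (P *v (A *v v)) = v \<bullet> (A *v (P *v (P *v (A *v v))))"
      by (simp add: symmetric_matrix_inner_swap[OF symP] symmetric_matrix_inner_swap[OF symA])
    then show ?thesis by (simp add: AP)
  qed
  define M where "M = A + P"
  have Mv: "M *v v = A *v v + P *v v" for v by (simp add: M_def matrix_vector_mult_add_rdistrib)
  have "inj ((*v) M)"
    unfolding M_def using symA AP Pfix by (intro symmetric_plus_kernel_projection_inj) (auto simp: N_def)
  then obtain Minv where MinvM: "Minv ** M = mat 1" using matrix_left_invertible_injective by blast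
  then have MMinv: "M ** Minv = mat 1" using matrix_left_right_inverse by blast
  have MinvMv: "Minv *v (M *v v) = v" for v using MinvM by (simp add: matrix_vector_mul_assoc)
  have MMinvv: "M *v (Minv *v v) = v" for v using MMinv by (simp add: matrix_vector_mul_assoc)
  have MinvP: "Minv *v (P *v v) = P *v v" for v
    using MinvMv[of "P *v v"] by (simp add: Mv AP PP)
  have PMinv: "P *v (Minv *v v) = P *v v" for v
    using arg_cong[OF MMinvv[of v], of "(*v) P"] by (simp add: Mv matrix_vector_right_distrib PA PP)
  define X where "X = Minv - P"
  have Xv: "X *v v = Minv *v v - P *v v" for v by (simp add: X_def matrix_vector_mult_diff_rdistrib)
  have AXv: "A *v (X *v v) = v - P *v v" for v
    using MMinvv[of v] by (simp add: Xv Mv matrix_vector_mult_diff_distrib AP PMinv eq_diff_eq)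
  have XAv: "X *v (A *v v) = v - P *v v" for v
    using MinvMv[of v] by (simp add: Xv Mv PA matrix_vector_right_distrib MinvP eq_diff_eq)
  have PX: "P *v (X *v v) = 0" for v by (simp add: Xv matrix_vector_mult_diff_distrib PMinv PP)
  have sym_IP: "x \<bullet> (y - P *v y) = (x - P *v x) \<bullet> y" for x y
    by (simp add: inner_diff_left inner_diff_right symmetric_matrix_inner_swap[OF symP])
  have "A ** X ** A = A"
    by (simp add: matrix_eq XAv matrix_vector_mult_diff_distrib AP flip: matrix_vector_mul_assoc)
  moreover have "X ** A ** X = X"
    by (simp add: matrix_eq XAv PX flip: matrix_vector_mul_assoc)
  moreover have "transpose (A ** X) = A ** X"
    by (rule transpose_eq_selfI) (simp add: AXv sym_IP flip: matrix_vector_mul_assoc)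
  moreover have "transpose (X ** A) = X ** A"
    by (rule transpose_eq_selfI) (simp add: XAv sym_IP flip: matrix_vector_mul_assoc)
  ultimately show ?thesis unfolding penrose_def by blast
qed

lemma penrose_pinv:
  fixes A :: "real^'n^'n"
  assumes "transpose A = A"
  shows "penrose A (pinv A)"
proof -
  have "\<exists>!X. penrose A X" using penrose_exists_symmetric[OF assms] penrose_unique by blast
  then show ?thesis unfolding pinv_def penrose_def[symmetric] by (rule theI')
qed

section \<open>Positive semidefinite quadratic forms\<close>

lemma quadratic_form_add:
  fixes H :: "real^'n^'n"
  assumes "transpose H = H"
  shows "(x + y) \<bullet> (H *v (x + y)) = x \<bullet> (H *v x) + 2 * (y \<bullet> (H *v x)) + y \<bullet> (H *v y)"
  using symmetric_matrix_inner_swap[OF assms, of y x]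
  by (simp add: inner_add_left inner_add_right matrix_vector_right_distrib inner_commute)

lemma quadratic_form_line:
  fixes H :: "real^'n^'n"
  assumes "transpose H = H"
  shows "(x + s *\<^sub>R y) \<bullet> (H *v (x + s *\<^sub>R y))
           = x \<bullet> (H *v x) + 2 * s * (y \<bullet> (H *v x)) + s\<^sup>2 * (y \<bullet> (H *v y))"
  unfolding quadratic_form_add[OF assms]
  by (simp add: matrix_vector_mult_scaleR power2_eq_square)

lemma psd_cauchy_schwarz:
  fixes H :: "real^'n^'n"
  assumes "psd H"
  shows "(y \<bullet> (H *v x))\<^sup>2 \<le> (x \<bullet> (H *v x)) * (y \<bullet> (H *v y))"
proof -
  have sym: "transpose H = H" and pos: "\<And>z. 0 \<le> z \<bullet> (H *v z)"
    using assms by (auto simp: psd_def)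
  define a b c where "a = x \<bullet> (H *v x)" and "b = y \<bullet> (H *v x)" and "c = y \<bullet> (H *v y)"
  have line: "0 \<le> a + 2 * t * b + t\<^sup>2 * c" for t
    using pos[of "x + t *\<^sub>R y"] unfolding quadratic_form_line[OF sym] a_def b_def c_def .
  show ?thesis
  proof (cases "c = 0")
    case True
    have "b = 0"
    proof (rule ccontr)
      assume "b \<noteq> 0"
      then have "a + 2 * (-(a + 1) / (2 * b)) * b = -1" by (simp add: field_simps)
      then show False using line[of "-(a + 1) / (2 * b)"] True by simp
    qed
    then show ?thesis using True by (simp add: a_def b_def c_def)
  next
    case False
    then have cp: "c > 0" using pos[of y] c_def by simp
    have "a + 2 * (-b/c) * b + (-b/c)\<^sup>2 * c = a - b\<^sup>2 / c"
      using cp by (simp add: field_simps power2_eq_square)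
    then have "b\<^sup>2 / c \<le> a" using line[of "-b/c"] by simp
    then show ?thesis using cp by (simp add: a_def b_def c_def divide_le_eq)
  qed
qed

lemma qf_complete_square:
  fixes H :: "real^'n^'n"
  assumes sym: "transpose H = H" and c: "c = H *v x0"
  shows "qf H c z = (z + (1/2) *\<^sub>R x0) \<bullet> (H *v (z + (1/2) *\<^sub>R x0))"
proof -
  have "H ** pinv H ** H = H" using penrose_pinv[OF sym] by (simp add: penrose_def)
  then have "H *v (pinv H *v (H *v x0)) = H *v x0" by (metis matrix_vector_mul_assoc)
  then have "c \<bullet> (pinv H *v c) = x0 \<bullet> (H *v x0)"
    using symmetric_matrix_inner_swap[OF sym, of x0 "pinv H *v (H *v x0)"] c by simp
  then show ?thesis
    unfolding qf_def quadratic_form_add[OF sym] c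
    using symmetric_matrix_inner_swap[OF sym, of x0 z]
    by (simp add: matrix_vector_mult_scaleR power2_eq_square inner_commute algebra_simps)
qed

section \<open>Concavity of Gaussian terms on the region where the form is at most 1/2\<close>

lemma convex_on_neg_exp_neg_quadratic:
  fixes \<kappa> \<beta> \<gamma> :: real
  assumes "\<And>s. s \<in> {0..1} \<Longrightarrow> (2 * \<beta> + 2 * s * \<gamma>)\<^sup>2 \<le> 2 * \<gamma>"
  shows "convex_on {0..1} (\<lambda>s. - exp (- (\<kappa> + 2 * s * \<beta> + s\<^sup>2 * \<gamma>)))"
proof -
  define p where "p s = \<kappa> + 2 * s * \<beta> + s\<^sup>2 * \<gamma>" for s
  define p' where "p' s = 2 * \<beta> + 2 * s * \<gamma>" for s
  have dp: "(p has_real_derivative p' s) (at s)" for s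
    unfolding p_def[abs_def] p'_def
    by (auto intro!: derivative_eq_intros simp: algebra_simps power2_eq_square)
  have "((\<lambda>s. - exp (- p s)) has_real_derivative p' s * exp (- p s)) (at s)" for s
    by (auto intro!: derivative_eq_intros dp)
  moreover have "((\<lambda>s. p' s * exp (- p s)) has_real_derivative
                   (2 * \<gamma> - (p' s)\<^sup>2) * exp (- p s)) (at s)" for s
    unfolding p'_def
    by (auto intro!: derivative_eq_intros dp[unfolded p'_def] simp: algebra_simps power2_eq_square)
  moreover have "0 \<le> (2 * \<gamma> - (p' s)\<^sup>2) * exp (- p s)" if "s \<in> {0..1}" for s
    using assms[OF that] by (simp add: p'_def)
  ultimately show ?thesis
    unfolding p_def[symmetric] by (rule f''_ge0_imp_convex[OF convex_real_interval(5)])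
qed

lemma concave_on_exp_neg_psd_form:
  fixes H :: "real^'n^'n" and S :: "(real^'n) set"
  assumes psdH: "psd H" and "convex S"
    and le_half: "\<And>u. u \<in> S \<Longrightarrow> (u + a) \<bullet> (H *v (u + a)) \<le> 1/2"
  shows "concave_on S (\<lambda>u. exp (- ((u + a) \<bullet> (H *v (u + a)))))"
  unfolding concave_on_def
proof (rule convex_onI[OF _ \<open>convex S\<close>])
  fix t :: real and x y assume t: "0 < t" "t < 1" and xS: "x \<in> S" and yS: "y \<in> S"
  have sym: "transpose H = H" using psdH by (simp add: psd_def)
  define Q where "Q v = v \<bullet> (H *v v)" for v
  define w where "w = x + a"
  define d where "d = y - x"
  define \<beta> where "\<beta> = d \<bullet> (H *v w)"
  define \<gamma> where "\<gamma> = Q d"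
  have segment: "(1 - s) *\<^sub>R x + s *\<^sub>R y + a = w + s *\<^sub>R d" for s
    by (simp add: w_def d_def algebra_simps)
  have Q_segment: "Q ((1 - s) *\<^sub>R x + s *\<^sub>R y + a) = Q w + 2 * s * \<beta> + s\<^sup>2 * \<gamma>" for s
    unfolding segment Q_def \<beta>_def \<gamma>_def quadratic_form_line[OF sym] ..
  define g where "g s = - exp (- (Q w + 2 * s * \<beta> + s\<^sup>2 * \<gamma>))" for s
  have "(2 * \<beta> + 2 * s * \<gamma>)\<^sup>2 \<le> 2 * \<gamma>" if "s \<in> {0..1}" for s
  proof -
    have "(1 - s) *\<^sub>R x + s *\<^sub>R y \<in> S"
      using \<open>convex S\<close> xS yS that by (simp add: convex_alt)
    then have Q_le: "Q (w + s *\<^sub>R d) \<le> 1/2" using le_half segment unfolding Q_def by metis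
    have "\<beta> + s * \<gamma> = d \<bullet> (H *v (w + s *\<^sub>R d))"
      by (simp add: \<beta>_def \<gamma>_def Q_def matrix_vector_right_distrib matrix_vector_mult_scaleR
          inner_add_right)
    then have "(\<beta> + s * \<gamma>)\<^sup>2 \<le> Q (w + s *\<^sub>R d) * \<gamma>"
      using psd_cauchy_schwarz[OF psdH, of d "w + s *\<^sub>R d"] by (simp add: Q_def \<gamma>_def)
    also have "\<dots> \<le> 1/2 * \<gamma>"
      using Q_le psdH by (intro mult_right_mono) (auto simp: \<gamma>_def Q_def psd_def)
    finally show ?thesis by (simp add: power2_eq_square algebra_simps)
  qed
  then have "convex_on {0..1} g"
    unfolding g_def by (rule convex_on_neg_exp_neg_quadratic)
  then have "g ((1 - t) *\<^sub>R 0 + t *\<^sub>R 1) \<le> (1 - t) * g 0 + t * g 1"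
    using t by (intro convex_onD) auto
  then show "- exp (- (((1 - t) *\<^sub>R x + t *\<^sub>R y + a) \<bullet> (H *v ((1 - t) *\<^sub>R x + t *\<^sub>R y + a))))
      \<le> (1 - t) * - exp (- ((x + a) \<bullet> (H *v (x + a)))) + t * - exp (- ((y + a) \<bullet> (H *v (y + a))))"
    using Q_segment[of t] Q_segment[of 0] Q_segment[of 1] by (simp add: g_def Q_def)
qed

section \<open>Points of minimal norm on the level set qf = 1/2\<close>

lemma qf_scaleR:
  "qf H c (s *\<^sub>R v) = qf H c 0 + s * (c \<bullet> v) + s\<^sup>2 * (v \<bullet> (H *v v))"
  by (simp add: qf_def matrix_vector_mult_scaleR power2_eq_square)

lemma continuous_on_qf: "continuous_on A (qf H c)"
  unfolding qf_def[abs_def] by (intro continuous_intros)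

lemma qf_zero_nonneg:
  assumes "psd H" "c \<in> range (\<lambda>x. H *v x)"
  shows "0 \<le> qf H c 0"
proof -
  obtain x0 where "c = H *v x0" using assms(2) by blast
  then have "qf H c 0 = ((1/2) *\<^sub>R x0) \<bullet> (H *v ((1/2) *\<^sub>R x0))"
    using assms(1) qf_complete_square[of H c x0 0] by (simp add: psd_def)
  moreover have "0 \<le> ((1/2) *\<^sub>R x0) \<bullet> (H *v ((1/2) *\<^sub>R x0))"
    using assms(1) unfolding psd_def by blast
  ultimately show ?thesis by simp
qed

lemma psd_nonzero_imp_form_pos:
  fixes H :: "real^'n^'n"
  assumes "psd H" "H \<noteq> 0"
  obtains v where "v \<bullet> (H *v v) > 0"
proof -
  obtain v where Hv: "H *v v \<noteq> 0" using assms(2) by (metis matrix_eq matrix_vector_mult_0)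
  have "v \<bullet> (H *v v) \<noteq> 0"
  proof
    assume "v \<bullet> (H *v v) = 0"
    then have "((H *v v) \<bullet> (H *v v))\<^sup>2 \<le> 0"
      using psd_cauchy_schwarz[OF assms(1), of "H *v v" v] by simp
    then show False using Hv by simp
  qed
  moreover have "0 \<le> v \<bullet> (H *v v)" using assms(1) by (simp add: psd_def)
  ultimately have "v \<bullet> (H *v v) > 0" by simp
  then show ?thesis by (rule that)
qed

lemma quadratic_unbounded_above:
  fixes \<beta> \<gamma> y :: real
  assumes "\<gamma> > 0"
  obtains T where "T \<ge> 0" "y \<le> \<beta> * T + \<gamma> * T\<^sup>2"
proof -
  define T where "T = max 1 ((\<bar>\<beta>\<bar> + \<bar>y\<bar>) / \<gamma>)"
  have T1: "T \<ge> 1" by (simp add: T_def)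
  have "\<gamma> * T \<ge> \<bar>\<beta>\<bar> + \<bar>y\<bar>"
    using assms by (simp add: T_def field_simps max_def)
  then have "\<gamma> * T\<^sup>2 \<ge> (\<bar>\<beta>\<bar> + \<bar>y\<bar>) * T"
    using T1 by (simp add: power2_eq_square mult_right_mono mult.assoc[symmetric])
  moreover have "(\<bar>\<beta>\<bar> + \<bar>y\<bar>) * T \<ge> - \<beta> * T + y"
  proof -
    have "- \<beta> * T \<le> \<bar>\<beta>\<bar> * T" using T1 by (intro mult_right_mono) auto
    moreover have "y \<le> \<bar>y\<bar> * T" using T1 mult_left_mono[of 1 T "\<bar>y\<bar>"] by simp
    ultimately show ?thesis by (simp add: distrib_right)
  qed
  ultimately have "y \<le> \<beta> * T + \<gamma> * T\<^sup>2" by simp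
  then show ?thesis using T1 by (intro that) auto
qed

lemma qf_level_set_nonempty:
  assumes "psd H" "H \<noteq> 0" "c \<in> range (\<lambda>x. H *v x)" "0 \<in> Dset H c"
  obtains z where "qf H c z = 1/2"
proof -
  obtain v where pos: "v \<bullet> (H *v v) > 0" using psd_nonzero_imp_form_pos assms(1,2) by blast
  then obtain T where "T \<ge> 0" and T: "1/2 \<le> (c \<bullet> v) * T + (v \<bullet> (H *v v)) * T\<^sup>2"
    by (rule quadratic_unbounded_above)
  define f where "f s = qf H c (s *\<^sub>R v)" for s
  have "f 0 \<le> 1/2" using assms(4) by (simp add: f_def Dset_def)
  moreover have "1/2 \<le> f T"
    using T qf_zero_nonneg[OF assms(1,3)] by (simp add: f_def qf_scaleR algebra_simps)
  moreover have "continuous_on {0..T} f"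
    unfolding f_def qf_scaleR by (intro continuous_intros)
  ultimately obtain s where "f s = 1/2" using IVT'[of f 0 "1/2" T] \<open>T \<ge> 0\<close> by auto
  then show ?thesis unfolding f_def by (rule that)
qed

lemma is_qmin_exists:
  assumes "psd H" "H \<noteq> 0" "c \<in> range (\<lambda>x. H *v x)" "0 \<in> Dset H c"
  shows "\<exists>z. is_qmin H c z"
proof -
  let ?L = "{z. qf H c z = 1/2}"
  have "?L \<noteq> {}" using qf_level_set_nonempty[OF assms] by blast
  moreover have "closed ?L" by (intro closed_Collect_eq continuous_on_qf continuous_on_const)
  ultimately obtain z where "z \<in> ?L" and "\<And>y. y \<in> ?L \<Longrightarrow> dist 0 z \<le> dist 0 y"
    using distance_attains_inf by blast
  then have "is_qmin H c z"
    unfolding is_qmin_def by (auto simp: dot_square_norm power_mono)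
  then show ?thesis ..
qed

lemma norm_le_is_qmin_imp_Dset:
  assumes "0 \<in> Dset H c" "is_qmin H c z" "norm u \<le> norm z"
  shows "u \<in> Dset H c"
proof (rule ccontr)
  assume "u \<notin> Dset H c"
  define f where "f s = qf H c (s *\<^sub>R u)" for s
  have f0: "f 0 \<le> 1/2" and f1: "f 1 > 1/2"
    using assms(1) \<open>u \<notin> Dset H c\<close> by (auto simp: f_def Dset_def)
  have "continuous_on {0..1} f" unfolding f_def qf_scaleR by (intro continuous_intros)
  then obtain s where s: "0 \<le> s" "s \<le> 1" "f s = 1/2" using IVT'[of f 0 "1/2" 1] f0 f1 by auto
  have "s < 1" using s f1 by (cases "s = 1") auto
  have "u \<noteq> 0" using f0 f1 by (auto simp: f_def)
  have "z \<bullet> z \<le> (s *\<^sub>R u) \<bullet> (s *\<^sub>R u)" using assms(2) s(3) unfolding is_qmin_def f_def by blast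
  also have "\<dots> = s\<^sup>2 * (norm u)\<^sup>2" by (simp add: dot_square_norm power_mult_distrib)
  also have "\<dots> < (norm u)\<^sup>2"
    using s \<open>s < 1\<close> \<open>u \<noteq> 0\<close> by (simp add: power_less_one_iff abs_of_nonneg)
  also have "\<dots> \<le> z \<bullet> z" using assms(3) by (simp add: dot_square_norm power_mono)
  finally show False by simp
qed

section \<open>The input constraint set\<close>

lemma norm_power2_eq_sum_blk:
  fixes u :: "real^('N::finite \<times> 'u::finite)"
  shows "(norm u)\<^sup>2 = (\<Sum>l\<in>UNIV. (norm (blk u l))\<^sup>2)"
proof -
  have "(norm u)\<^sup>2 = (\<Sum>i\<in>UNIV \<times> UNIV. u $ i * u $ i)"
    by (simp add: dot_square_norm[symmetric] inner_vec_def UNIV_Times_UNIV)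
  also have "\<dots> = (\<Sum>l\<in>UNIV. \<Sum>k\<in>UNIV. u $ (l, k) * u $ (l, k))"
    by (simp add: sum.cartesian_product)
  also have "\<dots> = (\<Sum>l\<in>UNIV. (norm (blk u l))\<^sup>2)"
    by (simp add: dot_square_norm[symmetric] inner_vec_def blk_def)
  finally show ?thesis .
qed

lemma norm_le_sqrt_of_Uset:
  fixes u :: "real^('N::finite \<times> 'u::finite)"
  assumes "u \<in> Uset \<epsilon>"
  shows "norm u \<le> sqrt (\<epsilon> * real CARD('N))"
proof -
  have "(norm u)\<^sup>2 \<le> (\<Sum>l\<in>(UNIV::'N set). \<epsilon>)"
    unfolding norm_power2_eq_sum_blk using assms by (intro sum_mono) (simp add: Uset_def)
  then show ?thesis by (simp add: real_le_rsqrt mult.commute)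
qed

lemma convex_Uset:
  assumes "0 \<le> \<epsilon>"
  shows "convex (Uset \<epsilon> :: (real^('N::finite \<times> 'u::finite)) set)"
proof (rule convexI)
  fix x y :: "real^('N \<times> 'u)" and a b :: real
  assume "x \<in> Uset \<epsilon>" "y \<in> Uset \<epsilon>" and ab: "0 \<le> a" "0 \<le> b" "a + b = 1"
  then have x: "norm (blk x l) \<le> sqrt \<epsilon>" and y: "norm (blk y l) \<le> sqrt \<epsilon>" for l
    by (simp_all add: Uset_def real_le_rsqrt)
  have "norm (blk (a *\<^sub>R x + b *\<^sub>R y) l) \<le> sqrt \<epsilon>" for l
  proof -
    have "blk (a *\<^sub>R x + b *\<^sub>R y) l = a *\<^sub>R blk x l + b *\<^sub>R blk y l"
      by (simp add: blk_def vec_eq_iff)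
    then have "norm (blk (a *\<^sub>R x + b *\<^sub>R y) l) \<le> a * norm (blk x l) + b * norm (blk y l)"
      using ab by (metis abs_of_nonneg norm_scaleR norm_triangle_ineq)
    also have "\<dots> \<le> a * sqrt \<epsilon> + b * sqrt \<epsilon>"
      using ab x y by (intro add_mono mult_left_mono) auto
    finally show ?thesis using ab by (simp flip: distrib_right)
  qed
  then have "(norm (blk (a *\<^sub>R x + b *\<^sub>R y) l))\<^sup>2 \<le> \<epsilon>" for l
    using assms by (metis norm_ge_zero power_mono real_sqrt_pow2)
  then show "a *\<^sub>R x + b *\<^sub>R y \<in> Uset \<epsilon>" by (simp add: Uset_def)
qed

lemma concave_on_sum_functions:
  assumes "finite P" "convex S" "\<And>i. i \<in> P \<Longrightarrow> concave_on S (f i)"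
  shows "concave_on S (\<lambda>u. \<Sum>i\<in>P. f i u)"
  using assms by (induction P rule: finite_induct) (simp_all add: concave_on_const concave_on_add)

lemma concave_on_Gaussian_term:
  fixes H :: "real^'n^'n"
  assumes "psd H" "c \<in> range (\<lambda>x. H *v x)" "convex S" "S \<subseteq> Dset H c" "0 \<le> w"
  shows "concave_on S (\<lambda>u. w * exp (- (u \<bullet> (H *v u)) - c \<bullet> u - h))"
proof -
  have sym: "transpose H = H" using assms(1) by (simp add: psd_def)
  obtain x0 where c: "c = H *v x0" using assms(2) by blast
  define a where "a = (1/2) *\<^sub>R x0"
  define Q where "Q v = v \<bullet> (H *v v)" for v
  have qf_Q: "qf H c u = Q (u + a)" for u
    using qf_complete_square[OF sym c] by (simp add: Q_def a_def)
  have exponent: "- (u \<bullet> (H *v u)) - c \<bullet> u - h = (Q a - h) + - Q (u + a)" for u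
    using qf_Q[of u] qf_Q[of 0] by (simp add: qf_def)
  have term_eq: "w * exp (- (u \<bullet> (H *v u)) - c \<bullet> u - h) = (w * exp (Q a - h)) * exp (- Q (u + a))"
    for u unfolding exponent by (simp add: mult.assoc mult_exp_exp)
  have "concave_on S (\<lambda>u. exp (- Q (u + a)))"
    unfolding Q_def using assms(4) qf_Q
    by (intro concave_on_exp_neg_psd_form[OF assms(1,3)]) (auto simp: Dset_def Q_def)
  then show ?thesis
    unfolding term_eq using assms(5) by (intro concave_on_cmul) auto
qed

theorem mainTheorem3:
  fixes P :: "('i \<times> 'i) set"
    and H :: "'i \<times> 'i \<Rightarrow> real^('N::finite \<times> 'u::finite)^('N \<times> 'u)"
    and c :: "'i \<times> 'i \<Rightarrow> real^('N \<times> 'u)"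
    and h w :: "'i \<times> 'i \<Rightarrow> real"
    and \<epsilon> :: real
  assumes "finite P"
    and "\<epsilon> > 0"
    and "\<And>ij. ij \<in> P \<Longrightarrow> psd (H ij) \<and> H ij \<noteq> 0"
    and "\<And>ij. ij \<in> P \<Longrightarrow> c ij \<in> range (\<lambda>x. H ij *v x)"
    and "\<And>ij. ij \<in> P \<Longrightarrow> w ij \<ge> 0"
    and "\<And>ij. ij \<in> P \<Longrightarrow> 0 \<in> Dset (H ij) (c ij)"
  shows "(\<forall>ij\<in>P. \<exists>z. is_qmin (H ij) (c ij) z) \<and>
    (\<forall>zs. (\<forall>ij\<in>P. is_qmin (H ij) (c ij) (zs ij)) \<longrightarrow>
       (\<forall>ij\<in>P. \<forall>u. norm u \<le> norm (zs ij) \<longrightarrow> u \<in> Dset (H ij) (c ij)) \<and>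
       ((\<forall>ij\<in>P. sqrt (\<epsilon> * real CARD('N)) \<le> norm (zs ij)) \<longrightarrow>
          (\<forall>ij\<in>P. Uset \<epsilon> \<subseteq> Dset (H ij) (c ij)) \<and>
          concave_on (Uset \<epsilon>) (Fsum P w H c h)))"
proof (intro conjI allI impI)
  show "\<forall>ij\<in>P. \<exists>z. is_qmin (H ij) (c ij) z"
    using assms(3,4,6) is_qmin_exists by blast
  fix zs assume zs: "\<forall>ij\<in>P. is_qmin (H ij) (c ij) (zs ij)"
  show ball: "\<forall>ij\<in>P. \<forall>u. norm u \<le> norm (zs ij) \<longrightarrow> u \<in> Dset (H ij) (c ij)"
    using assms(6) zs norm_le_is_qmin_imp_Dset by blast
  assume "\<forall>ij\<in>P. sqrt (\<epsilon> * real CARD('N)) \<le> norm (zs ij)"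
  then show U_sub: "\<forall>ij\<in>P. Uset \<epsilon> \<subseteq> Dset (H ij) (c ij)"
    using ball norm_le_sqrt_of_Uset order_trans by blast
  have "convex (Uset \<epsilon> :: (real^('N \<times> 'u)) set)" using assms(2) by (simp add: convex_Uset)
  then show "concave_on (Uset \<epsilon>) (Fsum P w H c h)"
    unfolding Fsum_def[abs_def] using assms(1,3,4,5) U_sub
    by (intro concave_on_sum_functions concave_on_Gaussian_term) auto
qed

end
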